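(* For $p,q>0$, $x\ge0$ and $0\le y\le 1$, $$B_{p,q}(x,y)=B_{p,q+1}(x,y)-\frac{e^{-x/2}}{qB(p,q)}\,y^p(1-y)^q M\!\left(p+q,p,\tfrac12xy\right),$$ and the same identity holds for $\bar B_{p,q}(x,y)$ with the sign of the last term reversed. Moreover, if in addition $p>1$, then $$B_{p,q}(x,y)=B_{p-1,q+1}(x,y)-\frac{e^{-x/2}}{qB(p,q)}\,y^{p-1}(1-y)^q M\!\left(p+q,p,\tfrac12xy\right).$$
   Context: For $p,q>0$ and $0\le y\le 1$, $I_y(p,q)=\frac{1}{B(p,q)}\int_0^y t^{p-1}(1-t)^{q-1}\,dt$ is the regularized incomplete beta function, with $B(p,q)=\Gamma(p)\Gamma(q)/\Gamma(p+q)$. The cumulative noncentral beta distribution is $B_{p,q}(x,y)=e^{-x/2}\sum_{j=0}^\infty \frac{1}{j!}\left(\frac x2\right)^j I_y(p+j,q)$ for $x\ge0$, and its complement is $\bar B_{p,q}(x,y)=1-B_{p,q}(x,y)$. $M(a,b,z)=\sum_{n\ge0}\frac{(a)_n}{(b)_n}\frac{z^n}{n!}$ is Kummer's confluent hypergeometric function, and $(a)_n$ is the Pochhammer symbol. *)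

theory Defs
  imports "HOL-Analysis.Analysis"
begin

definition inc_beta_reg :: "real \<Rightarrow> real \<Rightarrow> real \<Rightarrow> real" where
  "inc_beta_reg y p q =
     (LBINT t=0..y. t powr (p - 1) * (1 - t) powr (q - 1)) / Beta p q"

definition nc_beta_cdf :: "real \<Rightarrow> real \<Rightarrow> real \<Rightarrow> real \<Rightarrow> real" where
  "nc_beta_cdf p q x y =
     exp (- x / 2) * (\<Sum>j. (1 / fact j) * (x / 2) ^ j * inc_beta_reg y (p + real j) q)"

definition nc_beta_ccdf :: "real \<Rightarrow> real \<Rightarrow> real \<Rightarrow> real \<Rightarrow> real" where
  "nc_beta_ccdf p q x y = 1 - nc_beta_cdf p q x y"

definition kummerM :: "real \<Rightarrow> real \<Rightarrow> real \<Rightarrow> real" where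
  "kummerM a b z = (\<Sum>n. pochhammer a n / pochhammer b n * z ^ n / fact n)"

end

theory Submission
  imports Defs
begin

text \<open>Differentiating \<open>t\<^sup>a (1 - t)\<^sup>b\<close> and integrating over \<open>[0, y]\<close> gives
  \<open>y\<^sup>a (1 - y)\<^sup>b = a J(a, b + 1) - b J(a + 1, b)\<close> for the unregularized incomplete beta
  integral \<open>J\<close>; together with \<open>J(a, b) = J(a + 1, b) + J(a, b + 1)\<close> and the recurrences of the
  Beta function this yields the contiguous relations expressing \<open>I\<^sub>y(p, q)\<close> through
  \<open>I\<^sub>y(p, q + 1)\<close> and \<open>I\<^sub>y(p - 1, q + 1)\<close>. Substituting them termwise into the Poisson
  mixture defining \<open>B\<^sub>p\<^sub>,\<^sub>q(x, y)\<close>, the boundary terms sum to a Kummer series, since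
  \<open>B(p + j, q) = B(p, q) (p)\<^sub>j / (p + q)\<^sub>j\<close>.\<close>

definition inc_beta :: "real \<Rightarrow> real \<Rightarrow> real \<Rightarrow> real" where
  "inc_beta y a b = (LBINT t=0..y. t powr (a - 1) * (1 - t) powr (b - 1))"

lemma inc_beta_reg_eq: "inc_beta_reg y a b = inc_beta y a b / Beta a b"
  by (simp add: inc_beta_reg_def inc_beta_def)

lemma inc_beta_at_0 [simp]: "inc_beta 0 a b = 0"
  by (simp add: inc_beta_def zero_ereal_def [symmetric])

lemma inc_beta_eq_set_integral:
  assumes "0 \<le> y"
  shows "inc_beta y a b = (LINT t:{0<..<y}|lborel. t powr (a - 1) * (1 - t) powr (b - 1))"
  unfolding inc_beta_def using assms
  by (subst interval_lebesgue_integral_le_eq) (auto simp: zero_ereal_def)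

lemma set_integrable_beta_kernel:
  fixes a b y :: real
  assumes "a > 0" "b > 0" "y \<le> 1"
  shows "set_integrable lborel {0<..<y} (\<lambda>t. t powr (a - 1) * (1 - t) powr (b - 1))"
  using integrable_Beta[OF assms(1,2)] by (rule set_integrable_subset) (use assms in auto)

lemma Beta_real_pos: "a > 0 \<Longrightarrow> b > 0 \<Longrightarrow> Beta a b > (0::real)"
  unfolding Beta_def by simp

lemma inc_beta_le_Beta:
  fixes a b y :: real
  assumes "a > 0" "b > 0" "0 \<le> y" "y \<le> 1"
  shows "inc_beta y a b \<le> Beta a b"
proof -
  let ?f = "\<lambda>t::real. t powr (a - 1) * (1 - t) powr (b - 1)"
  have "(LINT t:{0<..<y}|lborel. ?f t) \<le> (LINT t:{0..1}|lborel. ?f t)"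
    using assms set_integrable_beta_kernel[OF assms(1,2,4)] integrable_Beta[OF assms(1,2)]
    unfolding set_lebesgue_integral_def set_integrable_def
    by (intro integral_mono) (auto simp: indicator_def)
  also have "\<dots> = Beta a b"
    using set_borel_integral_eq_integral(2)[OF integrable_Beta[OF assms(1,2)]]
      has_integral_Beta_real[OF assms(1,2)] by (simp add: integral_unique)
  finally show ?thesis using assms(3) by (simp add: inc_beta_eq_set_integral)
qed

lemma inc_beta_reg_bounds:
  fixes a b y :: real
  assumes "a > 0" "b > 0" "0 \<le> y" "y \<le> 1"
  shows "0 \<le> inc_beta_reg y a b" "inc_beta_reg y a b \<le> 1"
proof -
  have "0 \<le> inc_beta y a b"
    unfolding inc_beta_eq_set_integral[OF assms(3)] set_lebesgue_integral_def
    by (intro integral_nonneg_AE) (auto simp: indicator_def)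
  then show "0 \<le> inc_beta_reg y a b" "inc_beta_reg y a b \<le> 1"
    using inc_beta_le_Beta[OF assms] Beta_real_pos[OF assms(1,2)]
    by (simp_all add: inc_beta_reg_eq)
qed

lemma inc_beta_split:
  fixes a b y :: real
  assumes "a > 0" "b > 0" "0 \<le> y" "y \<le> 1"
  shows "inc_beta y a b = inc_beta y (a + 1) b + inc_beta y a (b + 1)"
proof -
  have kernel: "t powr (a - 1) * (1 - t) powr (b - 1)
      = t powr (a + 1 - 1) * (1 - t) powr (b - 1) + t powr (a - 1) * (1 - t) powr (b + 1 - 1)"
    if "t \<in> {0<..<y}" for t
  proof -
    have "t powr (a + 1 - 1) = t * t powr (a - 1)" "(1 - t) powr (b + 1 - 1) = (1 - t) * (1 - t) powr (b - 1)"
      using that assms by (simp_all add: powr_diff)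
    then show ?thesis by (simp only:) (simp add: algebra_simps)
  qed
  have "(LINT t:{0<..<y}|lborel. t powr (a - 1) * (1 - t) powr (b - 1))
      = (LINT t:{0<..<y}|lborel. t powr (a + 1 - 1) * (1 - t) powr (b - 1)
                                 + t powr (a - 1) * (1 - t) powr (b + 1 - 1))"
    using kernel by (intro set_lebesgue_integral_cong) auto
  also have "\<dots> = (LINT t:{0<..<y}|lborel. t powr (a + 1 - 1) * (1 - t) powr (b - 1))
      + (LINT t:{0<..<y}|lborel. t powr (a - 1) * (1 - t) powr (b + 1 - 1))"
    using assms by (intro set_integral_add set_integrable_beta_kernel) auto
  finally show ?thesis using assms(3) by (simp only: inc_beta_eq_set_integral)
qed

lemma inc_beta_parts:
  fixes a b y :: real
  assumes a: "a > 0" and b: "b > 0" and y: "0 \<le> y" "y \<le> 1"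
  shows "y powr a * (1 - y) powr b = a * inc_beta y a (b + 1) - b * inc_beta y (a + 1) b"
proof (cases "y = 0")
  case False
  with y have "0 < y" by simp
  define F where "F t = t powr a * (1 - t) powr b" for t :: real
  define k where "k a b t = t powr (a - 1) * (1 - t) powr (b - 1)" for a b t :: real
  define f where "f t = a * k a (b + 1) t - b * k (a + 1) b t" for t
  have k_int: "set_integrable lborel {0<..<y} (k c d)" if "c > 0" "d > 0" for c d
    unfolding k_def using that y by (intro set_integrable_beta_kernel)
  have int: "set_integrable lborel {0<..<y} f"
    unfolding f_def using a b by (intro set_integral_diff set_integrable_mult_right k_int) auto
  have "(LBINT t=ereal 0..ereal y. f t) = F y - 0"
  proof (rule interval_integral_FTC_integrable)
    fix t assume "ereal 0 < ereal t" "ereal t < ereal y"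
    then have t: "0 < t" "t < 1" using y by auto
    show "(F has_vector_derivative f t) (at t)"
      unfolding F_def f_def k_def has_real_derivative_iff_has_vector_derivative [symmetric]
      using t by (auto intro!: derivative_eq_intros simp: powr_diff field_simps)
    show "isCont f t"
      unfolding f_def k_def using t by (intro continuous_intros) auto
  next
    show "set_integrable lborel (einterval (ereal 0) (ereal y)) f" using int by simp
    have "(F \<longlongrightarrow> F 0) (at_right 0)"
      unfolding F_def using a b
      by (intro tendsto_intros tendsto_powr') (auto intro: eventually_mono[OF eventually_at_right_less])
    then show "((F \<circ> real_of_ereal) \<longlongrightarrow> 0) (at_right (ereal 0))"
      using a by (simp add: ereal_tendsto_simps1 F_def)
    have "\<forall>\<^sub>F t in at_left y. t \<in> {0<..<y}"
      using \<open>0 < y\<close> by (rule eventually_at_left_real)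
    then have "(F \<longlongrightarrow> F y) (at_left y)"
      unfolding F_def using a b y
      by (intro tendsto_intros tendsto_powr') (auto elim!: eventually_mono)
    then show "((F \<circ> real_of_ereal) \<longlongrightarrow> F y) (at_left (ereal y))"
      by (simp add: ereal_tendsto_simps1)
  qed (use \<open>0 < y\<close> in simp)
  then have "F y = (LINT t:{0<..<y}|lborel. f t)"
    using y by (simp add: zero_ereal_def interval_lebesgue_integral_le_eq)
  also have "\<dots> = a * (LINT t:{0<..<y}|lborel. k a (b + 1) t) - b * (LINT t:{0<..<y}|lborel. k (a + 1) b t)"
    unfolding f_def using a b by (simp add: k_int)
  also have "\<dots> = a * inc_beta y a (b + 1) - b * inc_beta y (a + 1) b"
    unfolding k_def inc_beta_eq_set_integral[OF y(1)] ..
  finally show ?thesis unfolding F_def .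
qed (use a in simp)

lemma not_nonpos_Int_if_pos: "(a::real) > 0 \<Longrightarrow> a \<notin> \<int>\<^sub>\<le>\<^sub>0"
  using nonpos_Ints_nonpos by fastforce

lemma inc_beta_reg_plus1_left:
  fixes a b y :: real
  assumes a: "a > 0" and b: "b > 0" and y: "0 \<le> y" "y \<le> 1"
  shows "inc_beta_reg y (a + 1) b
           = inc_beta_reg y a (b + 1) - y powr a * (1 - y) powr b / (b * Beta (a + 1) b)"
proof -
  have "(a + b) * (a * Beta a (b + 1)) = (a + b) * (b * Beta (a + 1) b)"
    using Beta_plus1_left[OF not_nonpos_Int_if_pos[OF a], of b]
      Beta_plus1_right[OF not_nonpos_Int_if_pos[OF b], of a] by (simp add: algebra_simps)
  then have Beta_eq: "a * Beta a (b + 1) = b * Beta (a + 1) b"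
    using a b by simp
  let ?R = "y powr a * (1 - y) powr b"
  have "inc_beta_reg y a (b + 1) = a * inc_beta y a (b + 1) / (b * Beta (a + 1) b)"
    using a by (simp add: inc_beta_reg_eq flip: Beta_eq)
  also have "\<dots> = (b * inc_beta y (a + 1) b + ?R) / (b * Beta (a + 1) b)"
    using inc_beta_parts[OF assms] by simp
  also have "\<dots> = inc_beta_reg y (a + 1) b + ?R / (b * Beta (a + 1) b)"
    using b by (simp add: inc_beta_reg_eq add_divide_distrib)
  finally show ?thesis by simp
qed

lemma inc_beta_reg_plus1_right:
  fixes a b y :: real
  assumes a: "a > 0" and b: "b > 0" and y: "0 \<le> y" "y \<le> 1"
  shows "inc_beta_reg y a b
           = inc_beta_reg y a (b + 1) - y powr a * (1 - y) powr b / (b * Beta a b)"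
proof -
  have Beta_eq: "(a + b) * Beta a (b + 1) = b * Beta a b"
    using Beta_plus1_right[OF not_nonpos_Int_if_pos[OF b]] .
  have "b * inc_beta y a b = (a + b) * inc_beta y a (b + 1) - y powr a * (1 - y) powr b"
    using inc_beta_split[OF assms] inc_beta_parts[OF assms] by (simp add: algebra_simps)
  moreover have "inc_beta_reg y a b = b * inc_beta y a b / (b * Beta a b)"
    using b by (simp add: inc_beta_reg_eq)
  ultimately have "inc_beta_reg y a b
      = ((a + b) * inc_beta y a (b + 1) - y powr a * (1 - y) powr b) / (b * Beta a b)"
    by simp
  also have "\<dots> = inc_beta_reg y a (b + 1) - y powr a * (1 - y) powr b / (b * Beta a b)"
    using a b by (simp add: inc_beta_reg_eq diff_divide_distrib flip: Beta_eq)
  finally show ?thesis .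
qed

lemma summable_nc_beta_series:
  fixes p q x y :: real
  assumes "p > 0" "q > 0" "0 \<le> y" "y \<le> 1"
  shows "summable (\<lambda>j. 1 / fact j * (x / 2) ^ j * inc_beta_reg y (p + real j) q)"
proof (rule summable_comparison_test [OF _ summable_norm_exp [of "x / 2"]])
  have "norm (1 / fact j * (x / 2) ^ j * inc_beta_reg y (p + real j) q) \<le> norm ((x / 2) ^ j /\<^sub>R fact j)"
    for j
  proof -
    have I: "0 \<le> inc_beta_reg y (p + real j) q" "inc_beta_reg y (p + real j) q \<le> 1"
      using inc_beta_reg_bounds[of "p + real j" q y] assms by simp_all
    have "norm (1 / fact j * (x / 2) ^ j * inc_beta_reg y (p + real j) q)
        = norm ((x / 2) ^ j /\<^sub>R fact j) * inc_beta_reg y (p + real j) q"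
      using I(1) by (simp add: abs_mult field_simps)
    also have "\<dots> \<le> norm ((x / 2) ^ j /\<^sub>R fact j)"
      using I by (intro mult_left_le) simp_all
    finally show ?thesis .
  qed
  then show "\<exists>N. \<forall>j\<ge>N. norm (1 / fact j * (x / 2) ^ j * inc_beta_reg y (p + real j) q)
      \<le> norm ((x / 2) ^ j /\<^sub>R fact j)"
    by blast
qed

lemma Beta_shift_pochhammer:
  fixes p q :: real
  assumes "p > 0" "q > 0"
  shows "Beta (p + real j) q * pochhammer (p + q) j = Beta p q * pochhammer p j"
proof -
  have poch: "pochhammer p j = Gamma (p + real j) / Gamma p"
    "pochhammer (p + q) j = Gamma (p + q + real j) / Gamma (p + q)"
    using assms by (simp_all add: pochhammer_Gamma not_nonpos_Int_if_pos)
  have "Gamma p > 0" "Gamma (p + q) > 0" "Gamma (p + real j + q) > 0"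
    using assms by simp_all
  then show ?thesis
    unfolding Beta_def poch by (simp add: field_simps)
qed

lemma poisson_beta_term_eq_kummer_term:
  fixes p q x y e :: real
  assumes p: "p > 0" and q: "q > 0" and y: "0 \<le> y"
  shows "1 / fact j * (x / 2) ^ j * (y powr (e + real j) * (1 - y) powr q / (q * Beta (p + real j) q))
    = y powr e * (1 - y) powr q / (q * Beta p q)
      * (pochhammer (p + q) j / pochhammer p j * (x * y / 2) ^ j / fact j)"
proof -
  have y_pow: "y powr (e + real j) = y powr e * y ^ j"
    using y by (cases "y = 0") (simp_all add: powr_add powr_realpow)
  have pos: "pochhammer p j > 0" "pochhammer (p + q) j > 0" "Beta p q > 0"
    using p q by (simp_all add: pochhammer_pos Beta_real_pos)
  have Beta_eq: "Beta (p + real j) q = Beta p q * pochhammer p j / pochhammer (p + q) j"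
    using Beta_shift_pochhammer[OF p q, of j] pos by (simp add: field_simps)
  show ?thesis
    unfolding Beta_eq y_pow using pos q by (simp add: field_simps)
qed

lemma suminf_diff_scaled:
  fixes A B m :: "nat \<Rightarrow> real"
  assumes eq: "\<And>j. A j = B j - K * m j" and A: "summable A" and B: "summable B"
  shows "suminf A = suminf B - K * suminf m"
proof (cases "K = 0")
  case True
  with eq have "A = B"
    by (simp add: fun_eq_iff)
  with True show ?thesis
    by simp
next
  case False
  have "summable (\<lambda>j. K * m j)"
    using summable_diff[OF B A] eq by simp
  then have "summable m"
    using False by simp
  have "A = (\<lambda>j. B j - K * m j)"
    using eq by auto
  then have "suminf A = suminf B - suminf (\<lambda>j. K * m j)"
    using B \<open>summable (\<lambda>j. K * m j)\<close> by (simp add: suminf_diff)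
  then show ?thesis
    using \<open>summable m\<close> by (simp add: suminf_mult)
qed

lemma nc_beta_cdf_recurrence:
  fixes p q p' q' e x y :: real
  assumes "p > 0" "q > 0" "p' > 0" "q' > 0" "0 \<le> y" "y \<le> 1"
    and rec: "\<And>j. inc_beta_reg y (p + real j) q = inc_beta_reg y (p' + real j) q'
                    - y powr (e + real j) * (1 - y) powr q / (q * Beta (p + real j) q)"
  shows "nc_beta_cdf p q x y = nc_beta_cdf p' q' x y
           - exp (- x / 2) / (q * Beta p q) * y powr e * (1 - y) powr q
             * kummerM (p + q) p (x * y / 2)"
proof -
  have series: "(\<Sum>j. 1 / fact j * (x / 2) ^ j * inc_beta_reg y (p + real j) q)
      = (\<Sum>j. 1 / fact j * (x / 2) ^ j * inc_beta_reg y (p' + real j) q')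
        - y powr e * (1 - y) powr q / (q * Beta p q) * kummerM (p + q) p (x * y / 2)"
    unfolding kummerM_def
  proof (rule suminf_diff_scaled)
    fix j
    show "1 / fact j * (x / 2) ^ j * inc_beta_reg y (p + real j) q
        = 1 / fact j * (x / 2) ^ j * inc_beta_reg y (p' + real j) q'
          - y powr e * (1 - y) powr q / (q * Beta p q)
            * (pochhammer (p + q) j / pochhammer p j * (x * y / 2) ^ j / fact j)"
      using poisson_beta_term_eq_kummer_term[OF assms(1,2,5), where j = j and x = x and e = e]
      by (simp add: rec right_diff_distrib)
  qed (intro summable_nc_beta_series; use assms(1-6) in simp)+
  show ?thesis
    unfolding nc_beta_cdf_def series by (simp add: algebra_simps)
qed

theorem mainTheorem4:
  fixes p q x y :: real
  assumes "p > 0" and "q > 0" and "x \<ge> 0" and "0 \<le> y" and "y \<le> 1"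
  shows "(nc_beta_cdf p q x y =
           nc_beta_cdf p (q + 1) x y
           - exp (- x / 2) / (q * Beta p q) * y powr p * (1 - y) powr q
             * kummerM (p + q) p (x * y / 2))
       \<and> (nc_beta_ccdf p q x y =
           nc_beta_ccdf p (q + 1) x y
           + exp (- x / 2) / (q * Beta p q) * y powr p * (1 - y) powr q
             * kummerM (p + q) p (x * y / 2))
       \<and> (p > 1 \<longrightarrow> nc_beta_cdf p q x y =
           nc_beta_cdf (p - 1) (q + 1) x y
           - exp (- x / 2) / (q * Beta p q) * y powr (p - 1) * (1 - y) powr q
             * kummerM (p + q) p (x * y / 2))"
proof (intro conjI impI)
  show "nc_beta_cdf p q x y = nc_beta_cdf p (q + 1) x y
      - exp (- x / 2) / (q * Beta p q) * y powr p * (1 - y) powr q * kummerM (p + q) p (x * y / 2)"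
    using assms by (intro nc_beta_cdf_recurrence inc_beta_reg_plus1_right) auto
  then show "nc_beta_ccdf p q x y = nc_beta_ccdf p (q + 1) x y
      + exp (- x / 2) / (q * Beta p q) * y powr p * (1 - y) powr q * kummerM (p + q) p (x * y / 2)"
    by (simp add: nc_beta_ccdf_def)
next
  assume "p > 1"
  have "inc_beta_reg y (p + real j) q = inc_beta_reg y (p - 1 + real j) (q + 1)
      - y powr (p - 1 + real j) * (1 - y) powr q / (q * Beta (p + real j) q)" for j
    using inc_beta_reg_plus1_left[of "p - 1 + real j" q y] \<open>p > 1\<close> assms by simp
  then show "nc_beta_cdf p q x y = nc_beta_cdf (p - 1) (q + 1) x y
      - exp (- x / 2) / (q * Beta p q) * y powr (p - 1) * (1 - y) powr q
        * kummerM (p + q) p (x * y / 2)"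
    using assms \<open>p > 1\<close> by (intro nc_beta_cdf_recurrence) auto
qed

end
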